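(* Let $G$ be a trigraph and $\varphi\in\operatorname{Aut}(G)$. Then there exists a partial contraction sequence of $G$ of width at most $4\Delta(G)$ whose last partition is the partition of $V(G)$ into the orbits of $\langle\varphi\rangle$, i.e., which contracts $G$ to $G/\langle\varphi\rangle$. In particular, $\operatorname{tww}(G)\leq\max\{4\Delta(G),\operatorname{tww}(G/\langle\varphi\rangle)\}$.
   Context: A trigraph is a finite simple graph whose edges are each colored red or black. $\operatorname{Aut}(G)$ is the automorphism group of the underlying simple graph of $G$ (automorphisms need not preserve edge colors); $\Delta(G)$ is the maximum degree (both colors). The red degree of a vertex is the number of red edges incident to it. For a partition $\mathcal{P}$ of $V(G)$, the quotient trigraph $G/\mathcal{P}$ has vertex set $\mathcal{P}$; two distinct parts $U,W$ are joined by a black edge if every pair $\{u,w\}$ with $u\in U,w\in W$ is a black edge of $G$, are non-adjacent if no such pair is an edge, and are joined by a red edge otherwise. For a group $\Gamma\subseteq\operatorname{Aut}(G)$, $G/\Gamma$ is the quotient by the partition into $\Gamma$-orbits. A contraction sequence of an $n$-vertex trigraph $G$ is a sequence $\mathcal{P}_n,\dots,\mathcal{P}_1$ of partitions of $V(G)$ where $\mathcal{P}_n$ is the partition into singletons and each $\mathcal{P}_i$ arises from $\mathcal{P}_{i+1}$ by merging two parts; a partial contraction sequence is a prefix $\mathcal{P}_n,\dots,\mathcal{P}_i$. The width is the maximum red degree over the trigraphs $G/\mathcal{P}_j$ in the sequence, and $\operatorname{tww}(G)$ is the minimum width of a (complete) contraction sequence. *)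

theory Defs
  imports Main
begin

text \<open>A trigraph on vertex type 'a: (V, B, R) = vertex set, black edges, red edges.
  Edges are 2-element subsets of V.\<close>
type_synonym 'a trigraph = "'a set \<times> 'a set set \<times> 'a set set"

definition verts :: "'a trigraph \<Rightarrow> 'a set" where "verts G = fst G"
definition black :: "'a trigraph \<Rightarrow> 'a set set" where "black G = fst (snd G)"
definition red :: "'a trigraph \<Rightarrow> 'a set set" where "red G = snd (snd G)"
definition edges :: "'a trigraph \<Rightarrow> 'a set set" where "edges G = black G \<union> red G"

definition trigraph :: "'a trigraph \<Rightarrow> bool" where
  "trigraph G \<longleftrightarrow> finite (verts G) \<and> black G \<inter> red G = {} \<and>
     (\<forall>e \<in> edges G. \<exists>u v. e = {u, v} \<and> u \<noteq> v \<and> u \<in> verts G \<and> v \<in> verts G)"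

text \<open>Automorphism of the underlying simple graph (colours need not be preserved).\<close>
definition is_aut :: "'a trigraph \<Rightarrow> ('a \<Rightarrow> 'a) \<Rightarrow> bool" where
  "is_aut G \<phi> \<longleftrightarrow> bij_betw \<phi> (verts G) (verts G) \<and>
     (\<forall>u \<in> verts G. \<forall>v \<in> verts G. {u, v} \<in> edges G \<longleftrightarrow> {\<phi> u, \<phi> v} \<in> edges G)"

definition degree :: "'a trigraph \<Rightarrow> 'a \<Rightarrow> nat" where
  "degree G v = card {w. {v, w} \<in> edges G}"

definition red_degree :: "'a trigraph \<Rightarrow> 'a \<Rightarrow> nat" where
  "red_degree G v = card {w. {v, w} \<in> red G}"

definition max_degree :: "'a trigraph \<Rightarrow> nat" where
  "max_degree G = Max (insert 0 (degree G ` verts G))"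

definition quotient :: "'a trigraph \<Rightarrow> 'a set set \<Rightarrow> 'a set trigraph" where
  "quotient G P =
    (P,
     {{U, W} | U W. U \<in> P \<and> W \<in> P \<and> U \<noteq> W \<and>
        (\<forall>u \<in> U. \<forall>w \<in> W. {u, w} \<in> black G)},
     {{U, W} | U W. U \<in> P \<and> W \<in> P \<and> U \<noteq> W \<and>
        (\<exists>u \<in> U. \<exists>w \<in> W. {u, w} \<in> edges G) \<and>
        \<not> (\<forall>u \<in> U. \<forall>w \<in> W. {u, w} \<in> black G)})"

definition singleton_partition :: "'a trigraph \<Rightarrow> 'a set set" where
  "singleton_partition G = {{v} | v. v \<in> verts G}"

definition merge_step :: "'a set set \<Rightarrow> 'a set set \<Rightarrow> bool" where
  "merge_step P P' \<longleftrightarrow> (\<exists>U \<in> P. \<exists>W \<in> P. U \<noteq> W \<and> P' = (P - {U, W}) \<union> {U \<union> W})"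

text \<open>A partial contraction sequence P_n, ..., P_i, as the list [P_n, ..., P_i].\<close>
definition partial_contraction_seq :: "'a trigraph \<Rightarrow> 'a set set list \<Rightarrow> bool" where
  "partial_contraction_seq G Ps \<longleftrightarrow> Ps \<noteq> [] \<and> hd Ps = singleton_partition G \<and>
     (\<forall>i. Suc i < length Ps \<longrightarrow> merge_step (Ps ! i) (Ps ! Suc i))"

definition contraction_seq :: "'a trigraph \<Rightarrow> 'a set set list \<Rightarrow> bool" where
  "contraction_seq G Ps \<longleftrightarrow> partial_contraction_seq G Ps \<and> card (last Ps) = 1"

definition width :: "'a trigraph \<Rightarrow> 'a set set list \<Rightarrow> nat" where
  "width G Ps = Max (insert 0 {red_degree (quotient G P) U | P U. P \<in> set Ps \<and> U \<in> P})"

definition tww :: "'a trigraph \<Rightarrow> nat" where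
  "tww G = Inf {width G Ps | Ps. contraction_seq G Ps}"

text \<open>Orbit of v under the cyclic group generated by \<phi> (for a permutation of a finite
  set, nonnegative powers suffice).\<close>
definition orbit_of :: "('a \<Rightarrow> 'a) \<Rightarrow> 'a \<Rightarrow> 'a set" where
  "orbit_of \<phi> v = {(\<phi> ^^ k) v | k. True}"

definition orbit_partition :: "'a trigraph \<Rightarrow> ('a \<Rightarrow> 'a) \<Rightarrow> 'a set set" where
  "orbit_partition G \<phi> = {orbit_of \<phi> v | v. v \<in> verts G}"

end

theory Submission
  imports Defs "HOL-Library.Disjoint_Sets"
begin

text \<open>
  The orbits of \<open>\<langle>\<phi>\<rangle>\<close> are the cycles of \<open>\<phi>\<close>. Number the vertices of each cycle
  from a base point and let level \<open>j\<close> be the partition into blocks of \<open>2^j\<close> consecutive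
  positions along a cycle: level 0 is discrete and every high level is the orbit partition.
  Level \<open>j + 1\<close> is reached from level \<open>j\<close> by merging pairs of blocks one at a time.
  A part \<open>U\<close> of any intermediate partition lies in a segment \<open>a, \<phi> a, \<dots>, \<phi>^(2L - 1) a\<close>
  with \<open>L = 2^j\<close>, so a red neighbour of \<open>U\<close> contains \<open>\<phi>^i w\<close> for a neighbour \<open>w\<close> of \<open>a\<close>
  and some \<open>i < 2L\<close>. The segment of length \<open>2L\<close> starting at \<open>w\<close> meets at most four blocks
  of level \<open>j\<close>, hence at most four parts, and the red degree is at most \<open>4 \<Delta>(G)\<close>.
  For the second claim, an optimal contraction sequence of \<open>G/\<langle>\<phi>\<rangle>\<close> is read as one of
  \<open>G\<close> by taking unions of orbits: \<open>(G/Q)/P\<close> is \<open>G/{\<Union>X | X \<in> P}\<close> up to renaming each part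
  \<open>X\<close> to \<open>\<Union>X\<close>.
\<close>

section \<open>Contraction sequences as merge sequences of partitions\<close>

lemma partial_contraction_seq_iff:
  "partial_contraction_seq G Ps \<longleftrightarrow>
     Ps \<noteq> [] \<and> hd Ps = singleton_partition G \<and> successively merge_step Ps"
  unfolding partial_contraction_seq_def successively_conv_nth ..

lemma singleton_partition_eq: "singleton_partition G = (\<lambda>v. {v}) ` verts G"
  unfolding singleton_partition_def by blast

lemma partition_on_part_eq:
  assumes "partition_on A P" "X \<in> P" "Y \<in> P" "x \<in> X" "x \<in> Y"
  shows "X = Y"
  using assms disjointD[OF partition_onD2[OF assms(1)], of X Y] by blast

lemma partition_on_merge_step:
  assumes "partition_on A P" "merge_step P P'"
  shows "partition_on A P'"
proof -
  obtain U W where UW: "U \<in> P" "W \<in> P" "U \<noteq> W" and P': "P' = (P - {U, W}) \<union> {U \<union> W}"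
    using assms(2) unfolding merge_step_def by blast
  have disj: "disjnt X Y" if "X \<in> P" "Y \<in> P" "X \<noteq> Y" for X Y
    using partition_onD2[OF assms(1)] that by (rule pairwiseD)
  show ?thesis
  proof (rule partition_onI)
    show "\<Union>P' = A" using partition_onD1[OF assms(1)] UW unfolding P' by blast
    show "{} \<notin> P'" using partition_onD3[OF assms(1)] UW unfolding P' by auto
    have merged: "disjnt (U \<union> W) Y" if "Y \<in> P - {U, W}" for Y
      using disj[of U Y] disj[of W Y] UW that by (auto simp: disjnt_Un1)
    show "disjnt X Y" if XY: "X \<in> P'" "Y \<in> P'" "X \<noteq> Y" for X Y
    proof -
      consider "X = U \<union> W" "Y \<in> P - {U, W}" | "Y = U \<union> W" "X \<in> P - {U, W}"
        | "X \<in> P" "Y \<in> P"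
        using XY unfolding P' by blast
      then show ?thesis
        by cases (use XY merged disj in \<open>auto intro: disjnt_sym\<close>)
    qed
  qed
qed

lemma partition_on_successively_merge_step:
  assumes "partition_on A (hd Ps)" "successively merge_step Ps" "R \<in> set Ps"
  shows "partition_on A R"
  using assms
proof (induction Ps rule: induct_list012)
  case (3 P P' Ps)
  have "partition_on A P'"
    using 3(3,4) partition_on_merge_step by auto
  then show ?case
    using 3(2) 3(3-5) by (cases "R = P") simp_all
qed auto

lemma partition_on_partial_contraction_seq:
  assumes "partial_contraction_seq G Ps" "R \<in> set Ps"
  shows "partition_on (verts G) R"
proof (rule partition_on_successively_merge_step[OF _ _ assms(2)])
  show "partition_on (verts G) (hd Ps)" "successively merge_step Ps"
    using assms(1) partition_on_singletons
    unfolding partial_contraction_seq_iff singleton_partition_eq by simp_all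
qed

lemma refines_merge_step:
  assumes "refines A P Q" "U \<in> P" "W \<in> P" "U \<noteq> W" "B \<in> Q" "U \<subseteq> B" "W \<subseteq> B"
  defines "P' \<equiv> (P - {U, W}) \<union> {U \<union> W}"
  shows "refines A P P'" "refines A P' Q"
proof -
  have "merge_step P P'"
    using assms(2-4) unfolding merge_step_def P'_def by blast
  then have "partition_on A P'"
    using assms(1) unfolding refines_def by (blast intro: partition_on_merge_step)
  then show "refines A P P'" "refines A P' Q"
    using assms(1,5-7) unfolding refines_def P'_def by blast+
qed

lemma card_merge_step_less:
  assumes "finite P" "merge_step P P'"
  shows "card P' < card P"
proof -
  obtain U W where UW: "U \<in> P" "W \<in> P" "U \<noteq> W" and P': "P' = (P - {U, W}) \<union> {U \<union> W}"
    using assms(2) unfolding merge_step_def by blast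
  have two: "2 \<le> card P"
    using card_mono[OF assms(1), of "{U, W}"] UW by simp
  have "card P' \<le> card (P - {U, W}) + 1"
    unfolding P' using assms(1) by (simp add: card_insert_le_m1)
  also have "\<dots> = card P - 1"
    using UW assms(1) two by (simp add: card_Diff_subset)
  finally show ?thesis using two by linarith
qed

lemma refines_coarser_has_mergeable_pair:
  assumes "refines A P Q" "P \<noteq> Q"
  obtains U W B where "U \<in> P" "W \<in> P" "U \<noteq> W" "B \<in> Q" "U \<subseteq> B" "W \<subseteq> B"
proof (rule ccontr)
  assume no_pair: "\<not> thesis"
  have "refines A Q P" unfolding refines_def
  proof (intro conjI ballI)
    show "partition_on A Q" "partition_on A P" using assms(1) unfolding refines_def by blast+
    fix B assume B: "B \<in> Q"
    have "B \<noteq> {}" using partition_onD3 \<open>partition_on A Q\<close> B by blast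
    moreover have "B = \<Union>{U \<in> P. U \<subseteq> B}"
      using partition_onD1[OF refines_obtains_subset[OF assms(1) B]] .
    ultimately obtain U where U: "U \<in> P" "U \<subseteq> B" by blast
    have "{U' \<in> P. U' \<subseteq> B} = {U}" using no_pair that U B by blast
    then have "B = U" using \<open>B = \<Union>{U \<in> P. U \<subseteq> B}\<close> by simp
    then show "\<exists>U\<in>P. B \<subseteq> U" using U(1) by blast
  qed
  then show False using refines_asym assms by blast
qed

lemma merge_steps_to_coarsening:
  assumes "finite A" "refines A P Q"
  shows "\<exists>Ps. Ps \<noteq> [] \<and> hd Ps = P \<and> last Ps = Q \<and> successively merge_step Ps \<and>
    (\<forall>R\<in>set Ps. refines A P R \<and> refines A R Q)"
  using assms(2)
proof (induction "card P" arbitrary: P rule: less_induct)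
  case less
  show ?case
  proof (cases "P = Q")
    case True
    then show ?thesis using less.prems refines_refl[of A P] unfolding refines_def
      by (intro exI[of _ "[P]"]) auto
  next
    case False
    then obtain U W B where UWB: "U \<in> P" "W \<in> P" "U \<noteq> W" "B \<in> Q" "U \<subseteq> B" "W \<subseteq> B"
      using refines_coarser_has_mergeable_pair[OF less.prems] by blast
    define P' where "P' = (P - {U, W}) \<union> {U \<union> W}"
    have step: "merge_step P P'" using UWB unfolding merge_step_def P'_def by blast
    have PP': "refines A P P'" and P'Q: "refines A P' Q"
      using refines_merge_step[OF less.prems UWB] unfolding P'_def by blast+
    have "finite P" using less.prems assms(1) unfolding refines_def by (blast intro: finite_elements)
    then have "card P' < card P" using step by (rule card_merge_step_less)
    then obtain Ps where Ps: "Ps \<noteq> []" "hd Ps = P'" "last Ps = Q" "successively merge_step Ps"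
      "\<forall>R\<in>set Ps. refines A P' R \<and> refines A R Q"
      using less.hyps P'Q by blast
    have "successively merge_step (P # Ps)"
      using Ps(1,2,4) step by (cases Ps) auto
    moreover have "\<forall>R\<in>set (P # Ps). refines A P R \<and> refines A R Q"
      using Ps(5) less.prems refines_trans[OF PP'] refines_refl[of A P]
        less.prems[unfolded refines_def] by auto
    moreover have "last (P # Ps) = Q" using Ps(1,3) last_ConsR by metis
    ultimately show ?thesis by (metis list.distinct(1) list.sel(1))
  qed
qed

lemma successively_append_tl:
  assumes "successively P xs" "successively P ys" "xs \<noteq> []" "last xs = hd ys"
  shows "successively P (xs @ tl ys)"
proof (cases ys)
  case (Cons y ys')
  then show ?thesis
    using assms by (cases ys') (auto simp: successively_append_iff)
qed (use assms in simp)

lemma partial_contraction_seq_append: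
  assumes "partial_contraction_seq G Ps" "successively merge_step Qs" "Qs \<noteq> []"
    "hd Qs = last Ps"
  shows "partial_contraction_seq G (Ps @ tl Qs)" "last (Ps @ tl Qs) = last Qs"
proof -
  have "Ps \<noteq> []" using assms(1) unfolding partial_contraction_seq_iff by blast
  then show "partial_contraction_seq G (Ps @ tl Qs)"
    using assms successively_append_tl[of merge_step Ps Qs]
    unfolding partial_contraction_seq_iff by simp
  show "last (Ps @ tl Qs) = last Qs"
    using \<open>Ps \<noteq> []\<close> assms(3,4) by (cases Qs) auto
qed

lemma finite_parts_partial_contraction_seq:
  assumes "finite (verts G)" "partial_contraction_seq G Ps" "R \<in> set Ps"
  shows "finite R"
  using assms finite_elements partition_on_partial_contraction_seq by blast

lemma finite_red_degrees:
  assumes "\<forall>R\<in>set Ps. finite R"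
  shows "finite {red_degree (quotient G R) U | R U. R \<in> set Ps \<and> U \<in> R}"
proof -
  have "{red_degree (quotient G R) U | R U. R \<in> set Ps \<and> U \<in> R} =
      (\<lambda>(R, U). red_degree (quotient G R) U) ` (SIGMA R:set Ps. R)"
    by auto
  then show ?thesis using assms by simp
qed

lemma width_le:
  assumes "\<forall>R\<in>set Ps. finite R"
    and "\<And>R U. R \<in> set Ps \<Longrightarrow> U \<in> R \<Longrightarrow> red_degree (quotient G R) U \<le> c"
  shows "width G Ps \<le> c"
  unfolding width_def using finite_red_degrees[OF assms(1)] assms(2) by (subst Max_le_iff) auto

lemma red_degree_le_width:
  assumes "\<forall>R\<in>set Ps. finite R" "R \<in> set Ps" "U \<in> R"
  shows "red_degree (quotient G R) U \<le> width G Ps"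
  unfolding width_def using finite_red_degrees[OF assms(1)] assms(2,3) by (intro Max_ge) auto

lemma width_append_tl_le:
  assumes "\<forall>R\<in>set Ps. finite R" "\<forall>R\<in>set Qs. finite R"
  shows "width G (Ps @ tl Qs) \<le> max (width G Ps) (width G Qs)"
proof (rule width_le)
  have "set (Ps @ tl Qs) \<subseteq> set Ps \<union> set Qs" by (cases Qs) auto
  then show "\<forall>R\<in>set (Ps @ tl Qs). finite R" using assms by blast
  fix R U assume "R \<in> set (Ps @ tl Qs)" "U \<in> R"
  then show "red_degree (quotient G R) U \<le> max (width G Ps) (width G Qs)"
    using \<open>set (Ps @ tl Qs) \<subseteq> _\<close> red_degree_le_width[OF assms(1)] red_degree_le_width[OF assms(2)]
    by (meson Un_iff max.coboundedI1 max.coboundedI2 subsetD)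
qed

lemma tww_le_width: "contraction_seq G Ps \<Longrightarrow> tww G \<le> width G Ps"
  unfolding tww_def by (rule cInf_lower) auto

lemma tww_attained:
  assumes "contraction_seq G Ps"
  obtains Qs where "contraction_seq G Qs" "width G Qs = tww G"
proof -
  have "tww G \<in> {width G Ps | Ps. contraction_seq G Ps}"
    unfolding tww_def by (rule Inf_nat_def1) (use assms in blast)
  then show ?thesis using that by force
qed

lemma contraction_seq_exists:
  assumes "finite (verts G)" "verts G \<noteq> {}"
  shows "\<exists>Ps. contraction_seq G Ps"
proof -
  have "refines (verts G) (singleton_partition G) {verts G}"
    unfolding refines_def singleton_partition_eq
    using partition_on_singletons partition_on_space[OF assms(2)] by blast
  then obtain Ps where "Ps \<noteq> []" "hd Ps = singleton_partition G" "last Ps = {verts G}"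
    "successively merge_step Ps"
    using merge_steps_to_coarsening[OF assms(1)] by blast
  then have "contraction_seq G Ps"
    unfolding contraction_seq_def partial_contraction_seq_iff by simp
  then show ?thesis ..
qed

text \<open>A trigraph without vertices has no contraction sequence, so its twin-width is the
  unspecified natural number \<open>Inf {}\<close>.\<close>
lemma tww_empty:
  assumes "verts G = {}"
  shows "tww G = Inf {}"
proof -
  have "\<not> contraction_seq G Ps" for Ps
  proof
    assume Ps: "contraction_seq G Ps"
    then have "partition_on {} (last Ps)"
      using assms partition_on_partial_contraction_seq[of G Ps "last Ps"]
      unfolding contraction_seq_def partial_contraction_seq_iff by simp
    then show False using Ps unfolding contraction_seq_def partition_on_empty by simp
  qed
  then show ?thesis unfolding tww_def by simp
qed

section \<open>Lifting contraction sequences of a quotient\<close>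

lemma verts_quotient [simp]: "verts (quotient G P) = P"
  unfolding verts_def quotient_def by simp

lemma doubleton_in_sym_collect:
  assumes "\<And>U W. P U W \<Longrightarrow> P W U"
  shows "{U, W} \<in> {{U, W} | U W. P U W} \<longleftrightarrow> P U W"
  using assms by (auto simp: doubleton_eq_iff)

lemma black_quotient:
  "black (quotient G R) = {{U, W} | U W. U \<in> R \<and> W \<in> R \<and> U \<noteq> W \<and>
     (\<forall>u\<in>U. \<forall>w\<in>W. {u, w} \<in> black G)}"
  unfolding black_def[of "quotient G R"] by (simp add: quotient_def)

lemma red_quotient:
  "red (quotient G R) = {{U, W} | U W. U \<in> R \<and> W \<in> R \<and> U \<noteq> W \<and>
     (\<exists>u\<in>U. \<exists>w\<in>W. {u, w} \<in> edges G) \<and> \<not> (\<forall>u\<in>U. \<forall>w\<in>W. {u, w} \<in> black G)}"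
  unfolding red_def[of "quotient G R"] by (simp add: quotient_def)

lemma doubleton_in_black_quotient:
  "{U, W} \<in> black (quotient G R) \<longleftrightarrow>
     U \<in> R \<and> W \<in> R \<and> U \<noteq> W \<and> (\<forall>u\<in>U. \<forall>w\<in>W. {u, w} \<in> black G)"
  unfolding black_quotient
  by (rule doubleton_in_sym_collect) (subst insert_commute, blast)

lemma doubleton_in_red_quotient:
  "{U, W} \<in> red (quotient G R) \<longleftrightarrow> U \<in> R \<and> W \<in> R \<and> U \<noteq> W \<and>
     (\<exists>u\<in>U. \<exists>w\<in>W. {u, w} \<in> edges G) \<and> \<not> (\<forall>u\<in>U. \<forall>w\<in>W. {u, w} \<in> black G)"
  unfolding red_quotient
  by (rule doubleton_in_sym_collect) (subst (1 2) insert_commute, blast)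

lemma doubleton_in_edges_quotient:
  assumes "{} \<notin> R"
  shows "{U, W} \<in> edges (quotient G R) \<longleftrightarrow>
     U \<in> R \<and> W \<in> R \<and> U \<noteq> W \<and> (\<exists>u\<in>U. \<exists>w\<in>W. {u, w} \<in> edges G)"
proof -
  have "\<exists>u\<in>U. \<exists>w\<in>W. {u, w} \<in> edges G"
    if "U \<in> R" "W \<in> R" "\<forall>u\<in>U. \<forall>w\<in>W. {u, w} \<in> black G"
    using that assms unfolding edges_def by (metis UnI1 all_not_in_conv)
  then show ?thesis
    unfolding edges_def[of "quotient G R"] Un_iff doubleton_in_red_quotient doubleton_in_black_quotient
    by blast
qed

lemma inj_on_Union_partition:
  assumes "partition_on A Q" "partition_on Q PP"
  shows "inj_on Union PP"
proof (rule inj_onI)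
  fix X Y assume X: "X \<in> PP" and Y: "Y \<in> PP" and eq: "\<Union>X = \<Union>Y"
  obtain B where B: "B \<in> X" using X partition_onD3[OF assms(2)] by (metis all_not_in_conv)
  then have "B \<in> Q" using X partition_onD1[OF assms(2)] by blast
  then obtain x where x: "x \<in> B" using partition_onD3[OF assms(1)] by (metis all_not_in_conv)
  then obtain B' where B': "B' \<in> Y" "x \<in> B'" using B eq by blast
  then have "B' \<in> Q" using Y partition_onD1[OF assms(2)] by blast
  then have "B' = B" using partition_on_part_eq[OF assms(1) _ \<open>B \<in> Q\<close> B'(2) x] by simp
  then show "X = Y" using partition_on_part_eq[OF assms(2) X Y B] B'(1) by simp
qed

lemma doubleton_in_red_quotient_Union:
  assumes Q: "partition_on A Q" and PP: "partition_on Q PP" and X: "X \<in> PP" and Y: "Y \<in> PP"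
  shows "{\<Union>X, \<Union>Y} \<in> red (quotient G (Union ` PP)) \<longleftrightarrow>
    {X, Y} \<in> red (quotient (quotient G Q) PP)"
proof (cases "X = Y")
  case True
  then show ?thesis unfolding doubleton_in_red_quotient by simp
next
  case False
  have "\<Union>X \<noteq> \<Union>Y" using inj_on_Union_partition[OF Q PP] X Y False by (auto dest: inj_onD)
  have "X \<subseteq> Q" "Y \<subseteq> Q" using X Y partition_onD1[OF PP] by auto
  then have parts: "B \<in> Q" "B' \<in> Q" "B \<noteq> B'" if "B \<in> X" "B' \<in> Y" for B B'
    using that partition_on_part_eq[OF PP X Y, of B] False by auto
  have "{B, B'} \<in> edges (quotient G Q) \<longleftrightarrow> (\<exists>u\<in>B. \<exists>w\<in>B'. {u, w} \<in> edges G)"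
    if "B \<in> X" "B' \<in> Y" for B B'
    using parts[OF that] doubleton_in_edges_quotient[OF partition_onD3[OF Q]] by simp
  then have "(\<exists>B\<in>X. \<exists>B'\<in>Y. {B, B'} \<in> edges (quotient G Q)) \<longleftrightarrow>
      (\<exists>u\<in>\<Union>X. \<exists>w\<in>\<Union>Y. {u, w} \<in> edges G)"
    by blast
  moreover have "{B, B'} \<in> black (quotient G Q) \<longleftrightarrow> (\<forall>u\<in>B. \<forall>w\<in>B'. {u, w} \<in> black G)"
    if "B \<in> X" "B' \<in> Y" for B B'
    using parts[OF that] doubleton_in_black_quotient[of B B' G Q] by blast
  then have "(\<forall>B\<in>X. \<forall>B'\<in>Y. {B, B'} \<in> black (quotient G Q)) \<longleftrightarrow>
      (\<forall>u\<in>\<Union>X. \<forall>w\<in>\<Union>Y. {u, w} \<in> black G)"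
    by blast
  ultimately show ?thesis
    unfolding doubleton_in_red_quotient using X Y False \<open>\<Union>X \<noteq> \<Union>Y\<close> by blast
qed

lemma red_degree_quotient_Union:
  assumes Q: "partition_on A Q" and PP: "partition_on Q PP" and X: "X \<in> PP"
  shows "red_degree (quotient G (Union ` PP)) (\<Union>X) = red_degree (quotient (quotient G Q) PP) X"
proof -
  let ?N = "{Y. {X, Y} \<in> red (quotient (quotient G Q) PP)}"
  have N: "?N \<subseteq> PP" unfolding doubleton_in_red_quotient by blast
  have "{W. {\<Union>X, W} \<in> red (quotient G (Union ` PP))} = Union ` ?N"
  proof (intro set_eqI iffI)
    fix W assume W: "W \<in> {W. {\<Union>X, W} \<in> red (quotient G (Union ` PP))}"
    then obtain Y where "Y \<in> PP" "W = \<Union>Y" unfolding doubleton_in_red_quotient by blast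
    then show "W \<in> Union ` ?N" using W doubleton_in_red_quotient_Union[OF Q PP X] by blast
  next
    fix W assume "W \<in> Union ` ?N"
    then show "W \<in> {W. {\<Union>X, W} \<in> red (quotient G (Union ` PP))}"
      using N doubleton_in_red_quotient_Union[OF Q PP X] by blast
  qed
  moreover have "inj_on Union ?N" using inj_on_subset[OF inj_on_Union_partition[OF Q PP] N] .
  ultimately show ?thesis unfolding red_degree_def by (simp add: card_image)
qed

lemma merge_step_image_Union:
  assumes "partition_on A Q" "partition_on Q PP" "merge_step PP PP'"
  shows "merge_step (Union ` PP) (Union ` PP')"
proof -
  obtain X Y where XY: "X \<in> PP" "Y \<in> PP" "X \<noteq> Y" and PP': "PP' = (PP - {X, Y}) \<union> {X \<union> Y}"
    using assms(3) unfolding merge_step_def by blast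
  have inj: "inj_on Union PP" by (rule inj_on_Union_partition[OF assms(1,2)])
  then have ne: "\<Union>X \<noteq> \<Union>Y" using XY by (auto dest: inj_onD)
  have "Union ` (PP - {X, Y}) = Union ` PP - {\<Union>X, \<Union>Y}"
    using inj_on_image_set_diff[OF inj, of PP "{X, Y}"] XY by simp
  then have img: "Union ` PP' = (Union ` PP - {\<Union>X, \<Union>Y}) \<union> {\<Union>X \<union> \<Union>Y}"
    unfolding PP' image_Un by (simp only: image_insert image_empty Union_Un_distrib)
  show ?thesis
    unfolding merge_step_def
    by (rule bexI[of _ "\<Union>X"], rule bexI[of _ "\<Union>Y"]) (use ne img XY in auto)
qed

lemma width_map_image_Union:
  assumes "partition_on A Q" "\<forall>PP\<in>set Qs. partition_on Q PP"
  shows "width G (map ((`) Union) Qs) = width (quotient G Q) Qs"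
proof -
  have "{red_degree (quotient G R) U | R U. R \<in> set (map ((`) Union) Qs) \<and> U \<in> R} =
      {red_degree (quotient (quotient G Q) PP) X | PP X. PP \<in> set Qs \<and> X \<in> PP}"
  proof (intro set_eqI iffI)
    fix d assume "d \<in> {red_degree (quotient G R) U | R U. R \<in> set (map ((`) Union) Qs) \<and> U \<in> R}"
    then obtain PP X where "PP \<in> set Qs" "X \<in> PP" "d = red_degree (quotient G (Union ` PP)) (\<Union>X)"
      by auto
    then show "d \<in> {red_degree (quotient (quotient G Q) PP) X | PP X. PP \<in> set Qs \<and> X \<in> PP}"
      using red_degree_quotient_Union[OF assms(1)] assms(2) by blast
  next
    fix d assume "d \<in> {red_degree (quotient (quotient G Q) PP) X | PP X. PP \<in> set Qs \<and> X \<in> PP}"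
    then obtain PP X where "PP \<in> set Qs" "X \<in> PP" "d = red_degree (quotient (quotient G Q) PP) X"
      by blast
    then have "Union ` PP \<in> set (map ((`) Union) Qs)" "\<Union>X \<in> Union ` PP"
      "d = red_degree (quotient G (Union ` PP)) (\<Union>X)"
      using red_degree_quotient_Union[OF assms(1)] assms(2) by auto
    then show "d \<in> {red_degree (quotient G R) U | R U. R \<in> set (map ((`) Union) Qs) \<and> U \<in> R}"
      by blast
  qed
  then show ?thesis unfolding width_def by simp
qed

lemma lift_contraction_seq:
  assumes Q: "partition_on A Q" and Qs: "contraction_seq (quotient G Q) Qs"
  defines "Qs' \<equiv> map ((`) Union) Qs"
  shows "Qs' \<noteq> []" "hd Qs' = Q" "successively merge_step Qs'" "card (last Qs') = 1"
    "width G Qs' = width (quotient G Q) Qs"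
proof -
  have seq: "Qs \<noteq> []" "hd Qs = (\<lambda>B. {B}) ` Q" "successively merge_step Qs"
    using Qs unfolding contraction_seq_def partial_contraction_seq_iff singleton_partition_eq by simp_all
  have parts: "\<forall>PP\<in>set Qs. partition_on Q PP"
    using Qs partition_on_partial_contraction_seq unfolding contraction_seq_def by fastforce
  show "Qs' \<noteq> []" using seq(1) unfolding Qs'_def by simp
  show "hd Qs' = Q" using seq(1,2) unfolding Qs'_def by (auto simp: hd_map image_image)
  show "successively merge_step Qs'"
    using seq(3) parts merge_step_image_Union[OF Q]
    unfolding Qs'_def successively_map by (blast intro: successively_mono)
  have "inj_on Union (last Qs)" using seq(1) parts inj_on_Union_partition[OF Q] by simp
  then show "card (last Qs') = 1"
    using Qs seq(1) unfolding Qs'_def contraction_seq_def by (simp add: last_map card_image)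
  show "width G Qs' = width (quotient G Q) Qs"
    unfolding Qs'_def using width_map_image_Union[OF Q parts] .
qed

lemma tww_le_max_width_tww_quotient:
  assumes fin: "finite (verts G)" and Ps: "partial_contraction_seq G Ps"
  shows "tww G \<le> max (width G Ps) (tww (quotient G (last Ps)))"
proof -
  let ?Q = "last Ps"
  let ?H = "quotient G ?Q"
  have Q: "partition_on (verts G) ?Q"
    using Ps partition_on_partial_contraction_seq[OF Ps last_in_set]
    unfolding partial_contraction_seq_iff by blast
  show ?thesis
  proof (cases "verts G = {}")
    case True
    then have "verts ?H = {}" using Q by (simp add: partition_on_empty)
    then have "tww G = tww ?H" using tww_empty True by metis
    then show ?thesis by simp
  next
    case False
    then have "verts ?H \<noteq> {}" "finite (verts ?H)"
      using partition_onD1[OF Q] False finite_elements[OF fin Q] by auto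
    then obtain Qs where Qs: "contraction_seq ?H Qs" "width ?H Qs = tww ?H"
      using contraction_seq_exists tww_attained by metis
    define Qs' where "Qs' = map ((`) Union) Qs"
    note lift = lift_contraction_seq[OF Q Qs(1), folded Qs'_def]
    have "partial_contraction_seq G (Ps @ tl Qs')" "last (Ps @ tl Qs') = last Qs'"
      using partial_contraction_seq_append[OF Ps lift(3,1)] lift(2) by simp_all
    then have "contraction_seq G (Ps @ tl Qs')" using lift(4) unfolding contraction_seq_def by simp
    then have "tww G \<le> width G (Ps @ tl Qs')" by (rule tww_le_width)
    also have "\<dots> \<le> max (width G Ps) (width G Qs')"
    proof (rule width_append_tl_le)
      show "\<forall>R\<in>set Ps. finite R" using finite_parts_partial_contraction_seq[OF fin Ps] by blast
      have "finite PP" if "PP \<in> set Qs" for PP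
        using that Qs(1) \<open>finite (verts ?H)\<close> finite_parts_partial_contraction_seq
        unfolding contraction_seq_def by blast
      then show "\<forall>R\<in>set Qs'. finite R" unfolding Qs'_def by auto
    qed
    also have "\<dots> = max (width G Ps) (tww ?H)" using lift(5) Qs(2) by simp
    finally show ?thesis .
  qed
qed

section \<open>Red degrees bounded along orbit segments\<close>

definition orbit_segment :: "('a \<Rightarrow> 'a) \<Rightarrow> 'a \<Rightarrow> nat \<Rightarrow> 'a set" where
  "orbit_segment f a n = (\<lambda>i. (f ^^ i) a) ` {..<n}"

lemma is_aut_funpow:
  assumes "is_aut G \<phi>"
  shows "is_aut G (\<phi> ^^ n)"
proof (induction n)
  case 0
  then show ?case unfolding is_aut_def by simp
next
  case (Suc n)
  have "bij_betw (\<phi> ^^ Suc n) (verts G) (verts G)"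
    using assms unfolding is_aut_def by (blast intro: bij_betw_funpow)
  moreover have "(\<phi> ^^ n) u \<in> verts G" if "u \<in> verts G" for u
    using Suc that unfolding is_aut_def bij_betw_def by blast
  ultimately show ?case
    using Suc assms unfolding is_aut_def by simp
qed

lemma edge_in_verts:
  assumes "trigraph G" "{u, w} \<in> edges G"
  shows "u \<in> verts G" "w \<in> verts G"
  using assms unfolding trigraph_def by (metis doubleton_eq_iff)+

lemma degree_le_max_degree:
  assumes "finite (verts G)" "v \<in> verts G"
  shows "degree G v \<le> max_degree G"
  unfolding max_degree_def using assms by (intro Max_ge) auto

text \<open>An edge from \<open>\<phi>^i a\<close> to a red neighbour \<open>W\<close> of \<open>U\<close> is the image under \<open>\<phi>^i\<close> of an
  edge \<open>{a, w}\<close>, and then \<open>W\<close> meets the segment starting at \<open>w\<close>.\<close>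
lemma red_degree_quotient_le_segments:
  assumes G: "trigraph G" and \<phi>: "is_aut G \<phi>" and R: "partition_on (verts G) R"
    and U: "U \<in> R" "a \<in> verts G" "U \<subseteq> orbit_segment \<phi> a n"
    and c: "\<And>w. w \<in> verts G \<Longrightarrow> card {W \<in> R. W \<inter> orbit_segment \<phi> w n \<noteq> {}} \<le> c"
  shows "red_degree (quotient G R) U \<le> c * max_degree G"
proof -
  let ?N = "{w. {a, w} \<in> edges G}"
  let ?meets = "\<lambda>w. {W \<in> R. W \<inter> orbit_segment \<phi> w n \<noteq> {}}"
  have fin: "finite (verts G)" using G unfolding trigraph_def by blast
  have N: "?N \<subseteq> verts G" using edge_in_verts[OF G] by blast
  then have "finite ?N" using fin finite_subset by blast
  have "{W. {U, W} \<in> red (quotient G R)} \<subseteq> (\<Union>w\<in>?N. ?meets w)"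
  proof
    fix W assume "W \<in> {W. {U, W} \<in> red (quotient G R)}"
    then obtain u x where W: "W \<in> R" "u \<in> U" "x \<in> W" "{u, x} \<in> edges G"
      unfolding doubleton_in_red_quotient by blast
    obtain i where i: "i < n" "u = (\<phi> ^^ i) a" using U(3) W(2) unfolding orbit_segment_def by blast
    have aut: "is_aut G (\<phi> ^^ i)" by (rule is_aut_funpow[OF \<phi>])
    have "x \<in> (\<phi> ^^ i) ` verts G"
      using edge_in_verts[OF G W(4)] aut unfolding is_aut_def bij_betw_def by simp
    then obtain w where w: "w \<in> verts G" "(\<phi> ^^ i) w = x" by blast
    have "{a, w} \<in> edges G" using aut W(4) i(2) w U(2) unfolding is_aut_def by simp
    moreover have "x \<in> W \<inter> orbit_segment \<phi> w n" using w i W(3) unfolding orbit_segment_def by blast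
    ultimately show "W \<in> (\<Union>w\<in>?N. ?meets w)" using W(1) by blast
  qed
  moreover have "finite (\<Union>w\<in>?N. ?meets w)" using finite_elements[OF fin R] \<open>finite ?N\<close> by auto
  ultimately have "red_degree (quotient G R) U \<le> card (\<Union>w\<in>?N. ?meets w)"
    unfolding red_degree_def by (rule card_mono[rotated])
  also have "\<dots> \<le> (\<Sum>w\<in>?N. card (?meets w))" by (rule card_UN_le[OF \<open>finite ?N\<close>])
  also have "\<dots> \<le> (\<Sum>w\<in>?N. c)" using N c by (intro sum_mono) blast
  also have "\<dots> = c * degree G a" unfolding degree_def by simp
  also have "\<dots> \<le> c * max_degree G" using degree_le_max_degree[OF fin U(2)] by simp
  finally show ?thesis .
qed

section \<open>Positions along the orbits of a permutation\<close>

lemma in_orbit_of_iff: "w \<in> orbit_of f v \<longleftrightarrow> (\<exists>k. (f ^^ k) v = w)"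
  unfolding orbit_of_def by auto

lemma funpow_in_orbit_of: "(f ^^ k) v \<in> orbit_of f v"
  unfolding orbit_of_def by blast

lemma self_in_orbit_of: "v \<in> orbit_of f v"
  using funpow_in_orbit_of[of 0 f v] by simp

locale finite_permutation =
  fixes V :: "'a set" and f :: "'a \<Rightarrow> 'a"
  assumes finite_V: "finite V" and bij_f: "bij_betw f V V"
begin

lemma funpow_in_V: "v \<in> V \<Longrightarrow> (f ^^ n) v \<in> V"
  using bij_betw_funpow[OF bij_f, of n] unfolding bij_betw_def by blast

lemma funpow_inj: "x \<in> V \<Longrightarrow> y \<in> V \<Longrightarrow> (f ^^ n) x = (f ^^ n) y \<Longrightarrow> x = y"
  using bij_betw_funpow[OF bij_f, of n] unfolding bij_betw_def inj_on_def by blast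

lemma funpow_cancel:
  assumes "v \<in> V" "a \<le> b" "(f ^^ a) v = (f ^^ b) v"
  shows "(f ^^ (b - a)) v = v"
proof -
  have "(f ^^ a) ((f ^^ (b - a)) v) = (f ^^ (a + (b - a))) v" by (simp add: funpow_add)
  then have "(f ^^ a) ((f ^^ (b - a)) v) = (f ^^ a) v" using assms(2,3) by simp
  then show ?thesis using funpow_inj funpow_in_V assms(1) by blast
qed

lemma exists_period:
  assumes "v \<in> V"
  shows "\<exists>n>0. (f ^^ n) v = v"
proof -
  have "(\<lambda>n. (f ^^ n) v) ` {..card V} \<subseteq> V" using funpow_in_V assms by blast
  then have "\<not> inj_on (\<lambda>n. (f ^^ n) v) {..card V}"
    using card_inj_on_le[of _ "{..card V}" V] finite_V by fastforce
  then obtain a b where "a < b" "(f ^^ a) v = (f ^^ b) v"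
    unfolding inj_on_def by (metis linorder_neqE_nat)
  then show ?thesis using funpow_cancel[OF assms] by (intro exI[of _ "b - a"]) simp
qed

definition period :: "'a \<Rightarrow> nat" where
  "period v = (LEAST n. 0 < n \<and> (f ^^ n) v = v)"

lemma period_pos: "v \<in> V \<Longrightarrow> 0 < period v"
  and funpow_period: "v \<in> V \<Longrightarrow> (f ^^ period v) v = v"
  using LeastI_ex[OF exists_period] unfolding period_def by blast+

lemma funpow_mod_period: "v \<in> V \<Longrightarrow> (f ^^ (n mod period v)) v = (f ^^ n) v"
  using funpow_mod_eq[OF funpow_period] .

lemma funpow_inj_below_period:
  assumes v: "v \<in> V" and ab: "a < period v" "b < period v" "(f ^^ a) v = (f ^^ b) v"
  shows "a = b"
proof (rule ccontr)
  assume "a \<noteq> b"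
  then obtain m n where mn: "m < n" "n < period v" "(f ^^ m) v = (f ^^ n) v"
    using ab by (metis linorder_neqE_nat)
  then have "(f ^^ (n - m)) v = v" using funpow_cancel[OF v] by simp
  moreover have "0 < n - m" "n - m < period v" using mn by auto
  ultimately show False unfolding period_def using not_less_Least by blast
qed

lemma orbit_of_subset: "v \<in> V \<Longrightarrow> orbit_of f v \<subseteq> V"
  unfolding orbit_of_def using funpow_in_V by blast

lemma orbit_of_trans: "w \<in> orbit_of f v \<Longrightarrow> orbit_of f w \<subseteq> orbit_of f v"
  unfolding orbit_of_def by (auto simp flip: funpow_add[THEN fun_cong, unfolded comp_def])

lemma orbit_of_sym:
  assumes v: "v \<in> V" and w: "w \<in> orbit_of f v"
  shows "v \<in> orbit_of f w"
proof -
  obtain k where k: "w = (f ^^ k) v" using w unfolding orbit_of_def by blast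
  have "(f ^^ (k * period v - k)) w = (f ^^ (k * period v - k + k)) v"
    unfolding k by (simp add: funpow_add)
  also have "k * period v - k + k = k * period v" using period_pos[OF v] by simp
  also have "(f ^^ (k * period v)) v = v" using funpow_mod_period[OF v, of "k * period v"] by simp
  finally show ?thesis using funpow_in_orbit_of[of "k * period v - k" f w] by simp
qed

lemma orbit_of_eq: "v \<in> V \<Longrightarrow> w \<in> orbit_of f v \<Longrightarrow> orbit_of f w = orbit_of f v"
  using orbit_of_trans orbit_of_sym by blast

definition rep :: "'a \<Rightarrow> 'a" where
  "rep v = (SOME r. r \<in> orbit_of f v)"

lemma rep_in_orbit_of: "rep v \<in> orbit_of f v"
  unfolding rep_def using self_in_orbit_of by (rule someI)

lemma rep_in_V: "v \<in> V \<Longrightarrow> rep v \<in> V"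
  using rep_in_orbit_of orbit_of_subset by blast

lemma rep_eq_iff:
  assumes "v \<in> V" "w \<in> V"
  shows "rep w = rep v \<longleftrightarrow> w \<in> orbit_of f v"
proof
  assume "rep w = rep v"
  then have "orbit_of f w = orbit_of f v"
    using orbit_of_eq[OF assms(1) rep_in_orbit_of] orbit_of_eq[OF assms(2) rep_in_orbit_of] by metis
  then show "w \<in> orbit_of f v" using self_in_orbit_of[of w f] by simp
next
  assume "w \<in> orbit_of f v"
  then show "rep w = rep v" unfolding rep_def using orbit_of_eq[OF assms(1)] by simp
qed

lemma rep_funpow: "v \<in> V \<Longrightarrow> rep ((f ^^ i) v) = rep v"
  using rep_eq_iff[OF _ funpow_in_V] funpow_in_orbit_of[of i f v] by blast

definition idx :: "'a \<Rightarrow> nat" where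
  "idx v = (LEAST i. (f ^^ i) (rep v) = v)"

lemma funpow_idx: "v \<in> V \<Longrightarrow> (f ^^ idx v) (rep v) = v"
proof -
  assume "v \<in> V"
  then have "v \<in> orbit_of f (rep v)" using orbit_of_sym rep_in_orbit_of by blast
  then obtain k where "(f ^^ k) (rep v) = v" unfolding in_orbit_of_iff by blast
  then show ?thesis unfolding idx_def by (rule LeastI)
qed

lemma idx_less_period: "v \<in> V \<Longrightarrow> idx v < period (rep v)"
proof -
  assume v: "v \<in> V"
  have "(f ^^ (idx v mod period (rep v))) (rep v) = v"
    using funpow_mod_period[OF rep_in_V[OF v]] funpow_idx[OF v] by simp
  then have "idx v \<le> idx v mod period (rep v)" unfolding idx_def by (rule Least_le)
  then show ?thesis using period_pos[OF rep_in_V[OF v]] by (meson le_less_trans mod_less_divisor)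
qed

lemma idx_eqI:
  assumes "v \<in> V" "i < period (rep v)" "(f ^^ i) (rep v) = v"
  shows "idx v = i"
  using funpow_inj_below_period[OF rep_in_V[OF assms(1)] idx_less_period[OF assms(1)] assms(2)]
    funpow_idx[OF assms(1)] assms(3) by simp

lemma idx_funpow:
  assumes v: "v \<in> V"
  shows "idx ((f ^^ i) v) = (idx v + i) mod period (rep v)"
proof (rule idx_eqI)
  show "(idx v + i) mod period (rep v) < period (rep ((f ^^ i) v))"
    using rep_funpow[OF v] period_pos[OF rep_in_V[OF v]] by simp
  have "(f ^^ ((idx v + i) mod period (rep v))) (rep v) = (f ^^ (i + idx v)) (rep v)"
    using funpow_mod_period[OF rep_in_V[OF v]] by (simp add: add.commute)
  also have "\<dots> = (f ^^ i) v" using funpow_idx[OF v] by (simp add: funpow_add)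
  finally show "(f ^^ ((idx v + i) mod period (rep v))) (rep ((f ^^ i) v)) = (f ^^ i) v"
    using rep_funpow[OF v] by simp
qed (use funpow_in_V v in blast)

lemma inj_on_rep_idx: "inj_on (\<lambda>v. (rep v, idx v)) V"
  by (rule inj_onI) (metis funpow_idx prod.inject)

end

section \<open>Dyadic blocks along the orbits\<close>

text \<open>Positions \<open>s, \<dots>, s + 2L - 1\<close> taken modulo \<open>K\<close> meet at most four blocks of \<open>L\<close>
  consecutive positions; the last block before \<open>K\<close> may be shorter.\<close>
lemma card_blocks_in_cyclic_window:
  fixes L K s :: nat
  assumes L: "0 < L" and s: "s < K"
  shows "card ((\<lambda>i. ((s + i) mod K) div L) ` {..<2 * L}) \<le> 4"
proof -
  let ?q = "s div L"
  define T where "T = (if K \<le> 2 * L \<or> K - s < L then {?q, ?q + 1, 0, 1} else {?q, ?q + 1, ?q + 2, 0})"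
  have "((s + i) mod K) div L \<in> T" if i: "i < 2 * L" for i
  proof (cases "K \<le> 2 * L")
    case True
    have "(s + i) mod K < 2 * L" using True s mod_less_divisor[of K "s + i"] by linarith
    then have "((s + i) mod K) div L < 2" using L by (simp add: div_less_iff_less_mult)
    then show ?thesis unfolding T_def using True by auto
  next
    case False
    show ?thesis
    proof (cases "s + i < K")
      case True
      then have x: "((s + i) mod K) div L = (s + i) div L" by simp
      have "?q \<le> (s + i) div L" by (simp add: div_le_mono)
      moreover have "(s + i) div L \<le> ?q + 2"
        using div_le_mono[of "s + i" "s + 2 * L" L] i L by simp
      moreover have "(s + i) div L \<le> ?q + 1" if "K - s < L"
      proof -
        have "s + i \<le> s + L" using True that by linarith
        then show ?thesis using div_le_mono[of "s + i" "s + L" L] L by (simp add: div_add_self2)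
      qed
      ultimately show ?thesis unfolding T_def x using False by auto
    next
      case wrap: False
      have m: "(s + i) mod K = s + i - K"
        using wrap False i s by (simp add: mod_if)
      have "s + i - K < 2 * L" using i s by linarith
      then have "(s + i - K) div L < 2" using L by (simp add: div_less_iff_less_mult)
      moreover have "(s + i - K) div L = 0" if "L \<le> K - s"
        using i that by (simp add: div_less)
      ultimately show ?thesis unfolding T_def m using False by auto
    qed
  qed
  then have "(\<lambda>i. ((s + i) mod K) div L) ` {..<2 * L} \<subseteq> T" by blast
  then have "card ((\<lambda>i. ((s + i) mod K) div L) ` {..<2 * L}) \<le> card T"
    by (rule card_mono[rotated]) (simp add: T_def)
  moreover have "card T \<le> 4"
  proof -
    have four: "card {a, b, c, d} \<le> 4" for a b c d :: nat
      using card_length[of "[a, b, c, d]"] by simp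
    show ?thesis
      unfolding T_def by (cases "K \<le> 2 * L \<or> K - s < L") (simp_all only: if_P if_False four)
  qed
  ultimately show ?thesis by linarith
qed

definition kernel_partition :: "'a set \<Rightarrow> ('a \<Rightarrow> 'b) \<Rightarrow> 'a set set" where
  "kernel_partition A g = (\<lambda>x. {y \<in> A. g y = g x}) ` A"

lemma partition_on_kernel_partition: "partition_on A (kernel_partition A g)"
proof (rule partition_onI)
  show "\<Union>(kernel_partition A g) = A" "{} \<notin> kernel_partition A g"
    unfolding kernel_partition_def by blast+
  fix p q assume "p \<in> kernel_partition A g" "q \<in> kernel_partition A g" "p \<noteq> q"
  moreover from this(1,2) obtain x y where p: "p = {z \<in> A. g z = g x}" and q: "q = {z \<in> A. g z = g y}"
    unfolding kernel_partition_def by blast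
  ultimately have "g x \<noteq> g y" by force
  then show "disjnt p q" unfolding disjnt_def p q by auto
qed

lemma refines_kernel_partition:
  assumes "\<And>x y. x \<in> A \<Longrightarrow> y \<in> A \<Longrightarrow> g x = g y \<Longrightarrow> h x = h y"
  shows "refines A (kernel_partition A g) (kernel_partition A h)"
  unfolding refines_def
proof (intro conjI partition_on_kernel_partition ballI)
  fix X assume "X \<in> kernel_partition A g"
  then obtain x where x: "x \<in> A" "X = {y \<in> A. g y = g x}" unfolding kernel_partition_def by blast
  have "{y \<in> A. h y = h x} \<in> kernel_partition A h" unfolding kernel_partition_def using x(1) by (rule imageI)
  moreover have "X \<subseteq> {y \<in> A. h y = h x}" unfolding x(2) using x(1) assms by blast
  ultimately show "\<exists>Y\<in>kernel_partition A h. X \<subseteq> Y" by blast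
qed

lemma kernel_partition_inj:
  assumes "inj_on g A"
  shows "kernel_partition A g = (\<lambda>x. {x}) ` A"
  unfolding kernel_partition_def using assms by (intro image_cong refl) (auto dest: inj_onD)

lemma kernel_partition_cong:
  assumes "\<And>x y. x \<in> A \<Longrightarrow> y \<in> A \<Longrightarrow> g x = g y \<longleftrightarrow> h x = h y"
  shows "kernel_partition A g = kernel_partition A h"
  unfolding kernel_partition_def using assms by (intro image_cong refl) auto

lemma card_parts_meeting_le:
  assumes R: "refines A (kernel_partition A g) R" and S: "S \<subseteq> A" "finite S"
  shows "card {W \<in> R. W \<inter> S \<noteq> {}} \<le> card (g ` S)"
proof -
  define pick where "pick W = (SOME x. x \<in> W \<inter> S)" for W
  have pick: "pick W \<in> W \<inter> S" if "W \<inter> S \<noteq> {}" for W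
    using that unfolding pick_def by (meson ex_in_conv someI_ex)
  have same_part: "W1 = W2"
    if "W1 \<in> R" "W2 \<in> R" "x1 \<in> W1" "x2 \<in> W2" "x1 \<in> A" "x2 \<in> A" "g x1 = g x2" for W1 W2 x1 x2
  proof -
    have "{y \<in> A. g y = g x1} \<in> kernel_partition A g"
      unfolding kernel_partition_def using that(5) by (rule imageI)
    then obtain W where W: "W \<in> R" "{y \<in> A. g y = g x1} \<subseteq> W"
      using R unfolding refines_def by (elim conjE bexE) (drule (1) bspec, elim bexE, blast)
    have "x1 \<in> W" "x2 \<in> W" using W(2) that(5-7) by (simp_all add: subset_iff)
    with W(1) show ?thesis
      using partition_on_part_eq[of A R] R that(1-4) unfolding refines_def by metis
  qed
  have "inj_on (g \<circ> pick) {W \<in> R. W \<inter> S \<noteq> {}}"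
  proof (rule inj_onI)
    fix W1 W2 assume W1: "W1 \<in> {W \<in> R. W \<inter> S \<noteq> {}}" and W2: "W2 \<in> {W \<in> R. W \<inter> S \<noteq> {}}"
      and eq: "(g \<circ> pick) W1 = (g \<circ> pick) W2"
    have picks: "pick W1 \<in> W1" "pick W1 \<in> A" "pick W2 \<in> W2" "pick W2 \<in> A"
      using pick W1 W2 S(1) by auto
    show "W1 = W2" by (rule same_part[of W1 W2 "pick W1" "pick W2"]) (use W1 W2 eq picks in auto)
  qed
  moreover have "(g \<circ> pick) ` {W \<in> R. W \<inter> S \<noteq> {}} \<subseteq> g ` S"
  proof (rule image_subsetI)
    fix W assume "W \<in> {W \<in> R. W \<inter> S \<noteq> {}}"
    then have "pick W \<in> S" using pick by blast
    then show "(g \<circ> pick) W \<in> g ` S" by simp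
  qed
  ultimately show ?thesis by (rule card_inj_on_le) (simp add: S(2))
qed

context finite_permutation
begin

text \<open>Level \<open>j\<close> cuts every orbit, numbered from its base point, into blocks of \<open>2^j\<close>
  consecutive positions (the last block of an orbit may be shorter).\<close>
definition level :: "nat \<Rightarrow> 'a set set" where
  "level j = kernel_partition V (\<lambda>v. (rep v, idx v div 2 ^ j))"

lemma partition_on_level: "partition_on V (level j)"
  unfolding level_def by (rule partition_on_kernel_partition)

lemma level_0: "level 0 = (\<lambda>v. {v}) ` V"
  unfolding level_def using kernel_partition_inj[OF inj_on_rep_idx] by simp

lemma refines_level_Suc: "refines V (level j) (level (Suc j))"
  unfolding level_def
  by (rule refines_kernel_partition) (metis div_mult2_eq power_Suc2 prod.inject)

lemma orbit_partition_eq_kernel_partition: "{orbit_of f v | v. v \<in> V} = kernel_partition V rep"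
proof -
  have "orbit_of f v = {w \<in> V. rep w = rep v}" if "v \<in> V" for v
    using that orbit_of_subset rep_eq_iff by blast
  then show ?thesis unfolding kernel_partition_def by blast
qed

lemma level_eq_orbit_partition:
  assumes "\<forall>v\<in>V. idx v < 2 ^ J"
  shows "level J = {orbit_of f v | v. v \<in> V}"
  unfolding level_def orbit_partition_eq_kernel_partition
  by (rule kernel_partition_cong) (simp add: assms)

lemma level_Suc_part_subset_segment:
  assumes "U \<in> level (Suc j)"
  obtains a where "a \<in> V" "U \<subseteq> orbit_segment f a (2 * 2 ^ j)"
proof -
  let ?L = "2 * 2 ^ j :: nat"
  obtain v where v: "v \<in> V" and U: "U = {w \<in> V. rep w = rep v \<and> idx w div ?L = idx v div ?L}"
    using assms unfolding level_def kernel_partition_def by auto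
  define a where "a = (f ^^ (idx v div ?L * ?L)) (rep v)"
  have "U \<subseteq> orbit_segment f a ?L"
  proof
    fix w assume "w \<in> U"
    then have w: "w \<in> V" "rep w = rep v" "idx w div ?L = idx v div ?L" using U by auto
    have "w = (f ^^ (idx w mod ?L + idx w div ?L * ?L)) (rep w)"
      using funpow_idx[OF w(1)] by (simp only: mod_div_mult_eq)
    also have "\<dots> = (f ^^ (idx w mod ?L)) a" unfolding a_def w(2,3) by (simp add: funpow_add)
    finally show "w \<in> orbit_segment f a ?L" unfolding orbit_segment_def by simp
  qed
  moreover have "a \<in> V" unfolding a_def using funpow_in_V rep_in_V v by blast
  ultimately show ?thesis using that by blast
qed

lemma card_parts_meeting_segment_le_4:
  assumes R: "refines V (level j) R" and w: "w \<in> V"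
  shows "card {W \<in> R. W \<inter> orbit_segment f w (2 * 2 ^ j) \<noteq> {}} \<le> 4"
proof -
  let ?key = "\<lambda>v. (rep v, idx v div 2 ^ j)"
  let ?S = "orbit_segment f w (2 * 2 ^ j)"
  have "?S \<subseteq> V" unfolding orbit_segment_def using funpow_in_V w by blast
  then have "card {W \<in> R. W \<inter> ?S \<noteq> {}} \<le> card (?key ` ?S)"
    using R unfolding level_def by (intro card_parts_meeting_le) (auto simp: orbit_segment_def)
  also have "?key ` ?S = Pair (rep w) ` (\<lambda>i. ((idx w + i) mod period (rep w)) div 2 ^ j) ` {..<2 * 2 ^ j}"
    unfolding orbit_segment_def image_image using rep_funpow[OF w] idx_funpow[OF w] by simp
  also have "card \<dots> = card ((\<lambda>i. ((idx w + i) mod period (rep w)) div 2 ^ j) ` {..<2 * 2 ^ j})"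
    by (rule card_image) (simp add: inj_on_def)
  also have "\<dots> \<le> 4"
    by (rule card_blocks_in_cyclic_window) (simp_all add: idx_less_period[OF w])
  finally show ?thesis .
qed

end

locale trigraph_automorphism =
  fixes G :: "'a trigraph" and \<phi> :: "'a \<Rightarrow> 'a"
  assumes trigraph: "trigraph G" and aut: "is_aut G \<phi>"

sublocale trigraph_automorphism \<subseteq> finite_permutation "verts G" \<phi>
  using trigraph aut unfolding trigraph_def is_aut_def by unfold_locales auto

context trigraph_automorphism
begin

lemma red_degree_between_levels:
  assumes "refines (verts G) (level j) R" "refines (verts G) R (level (Suc j))" "U \<in> R"
  shows "red_degree (quotient G R) U \<le> 4 * max_degree G"
proof -
  have R: "partition_on (verts G) R" using assms(1) unfolding refines_def by blast
  obtain U' where "U' \<in> level (Suc j)" "U \<subseteq> U'"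
    using assms(2,3) unfolding refines_def by blast
  then obtain a where "a \<in> verts G" "U \<subseteq> orbit_segment \<phi> a (2 * 2 ^ j)"
    using level_Suc_part_subset_segment by (metis order_trans)
  then show ?thesis
    using red_degree_quotient_le_segments[OF trigraph aut R assms(3)]
      card_parts_meeting_segment_le_4[OF assms(1)] by blast
qed

lemma level_contraction_seq:
  "\<exists>Ps. partial_contraction_seq G Ps \<and> last Ps = level j \<and> width G Ps \<le> 4 * max_degree G"
proof (induction j)
  case 0
  have "partial_contraction_seq G [level 0]"
    unfolding partial_contraction_seq_iff singleton_partition_eq level_0 by simp
  moreover have "width G [level 0] \<le> 4 * max_degree G"
    using red_degree_between_levels[OF refines_refl[OF partition_on_level] refines_level_Suc]
      finite_elements[OF finite_V partition_on_level] by (intro width_le) auto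
  ultimately show ?case by (intro exI[of _ "[level 0]"]) simp
next
  case (Suc j)
  then obtain Ps where Ps: "partial_contraction_seq G Ps" "last Ps = level j"
    "width G Ps \<le> 4 * max_degree G" by blast
  obtain Qs where Qs: "Qs \<noteq> []" "hd Qs = level j" "last Qs = level (Suc j)"
    "successively merge_step Qs"
    and between: "\<forall>R\<in>set Qs. refines (verts G) (level j) R \<and> refines (verts G) R (level (Suc j))"
    using merge_steps_to_coarsening[OF finite_V refines_level_Suc] by blast
  have fin_Qs: "\<forall>R\<in>set Qs. finite R"
  proof
    fix R assume "R \<in> set Qs"
    then have "partition_on (verts G) R" using between unfolding refines_def by blast
    then show "finite R" by (rule finite_elements[OF finite_V])
  qed
  have "width G (Ps @ tl Qs) \<le> max (width G Ps) (width G Qs)"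
    using finite_parts_partial_contraction_seq[OF finite_V Ps(1)] fin_Qs
    by (intro width_append_tl_le) blast+
  moreover have "width G Qs \<le> 4 * max_degree G"
    using between red_degree_between_levels fin_Qs by (intro width_le) auto
  ultimately have width: "width G (Ps @ tl Qs) \<le> 4 * max_degree G" using Ps(3) by linarith
  have "hd Qs = last Ps" using Qs(2) Ps(2) by simp
  note appended = partial_contraction_seq_append[OF Ps(1) Qs(4,1) this]
  show ?case
  proof (intro exI conjI)
    show "partial_contraction_seq G (Ps @ tl Qs)" by (rule appended(1))
    show "last (Ps @ tl Qs) = level (Suc j)" using appended(2) Qs(3) by (rule trans)
  qed (rule width)
qed

lemma orbit_partition_contraction_seq:
  "\<exists>Ps. partial_contraction_seq G Ps \<and> width G Ps \<le> 4 * max_degree G \<and>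
     last Ps = orbit_partition G \<phi>"
proof -
  define J where "J = Max (idx ` verts G)"
  have "idx v < 2 ^ J" if "v \<in> verts G" for v
  proof -
    have "idx v \<le> J" unfolding J_def using finite_V that by simp
    then show ?thesis using less_exp[of J] by linarith
  qed
  then have J: "level J = orbit_partition G \<phi>"
    unfolding orbit_partition_def by (intro level_eq_orbit_partition ballI)
  obtain Ps where "partial_contraction_seq G Ps" "last Ps = level J" "width G Ps \<le> 4 * max_degree G"
    using level_contraction_seq by blast
  moreover from this(2) have "last Ps = orbit_partition G \<phi>" unfolding J .
  ultimately show ?thesis by blast
qed

end

theorem mainTheorem14:
  fixes G :: "'a trigraph" and \<phi> :: "'a \<Rightarrow> 'a"
  assumes "trigraph G" and "is_aut G \<phi>"
  shows "(\<exists>Ps. partial_contraction_seq G Ps \<and> width G Ps \<le> 4 * max_degree G \<and>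
             last Ps = orbit_partition G \<phi>)
       \<and> tww G \<le> max (4 * max_degree G) (tww (quotient G (orbit_partition G \<phi>)))"
proof -
  interpret trigraph_automorphism G \<phi> using assms by unfold_locales
  obtain Ps where Ps: "partial_contraction_seq G Ps" "width G Ps \<le> 4 * max_degree G"
    "last Ps = orbit_partition G \<phi>"
    using orbit_partition_contraction_seq by blast
  have "tww G \<le> max (width G Ps) (tww (quotient G (last Ps)))"
    by (rule tww_le_max_width_tww_quotient[OF finite_V Ps(1)])
  also have "\<dots> \<le> max (4 * max_degree G) (tww (quotient G (orbit_partition G \<phi>)))"
    using Ps(2,3) by simp
  finally show ?thesis using Ps by blast
qed

end
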